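(* Let $\mathbb F$ be a field. For $u,v\in\mathbb F$ let $\mathcal D(u,v)$ be the $2\times2\times2$ spatial matrix with horizontal slices \[ \mathcal D(u,v)=\left\|\begin{bmatrix}1&0\\0&1\end{bmatrix}\middle|\begin{bmatrix}0&v\\1&u\end{bmatrix}\right\|. \] Then $\mathcal D(u,v)$ is equivalent to $\mathcal D(u',v')$ ($u',v'\in\mathbb F$) if and only if there exist $a,b,c,d\in\mathbb F$ such that \[ ad-bc\ne0,\qquad a^2+uab-vb^2\ne0, \] and \[ u'=\frac{2ac+uad+ucb-2vbd}{a^2+uab-vb^2},\qquad v'=\frac{-c^2-ucd+vd^2}{a^2+uab-vb^2}. \]
   Context: An $m\times n\times q$ spatial matrix over $\mathbb F$ is an array $[a_{ijk}]$ ($1\le i\le m$, $1\le j\le n$, $1\le k\le q$) with entries in $\mathbb F$, written $\|A_1|\dots|A_q\|$ with horizontal slices $A_k=[a_{ijk}]_{ij}$. Two $m\times n\times q$ spatial matrices $[a_{ijk}]$ and $[b_{ijk}]$ are equivalent if there are nonsingular matrices $R=[r_{ii'}]$ ($m\times m$), $S=[s_{jj'}]$ ($n\times n$), $T=[t_{kk'}]$ ($q\times q$) with $b_{i'j'k'}=\sum_{i,j,k}a_{ijk}r_{ii'}s_{jj'}t_{kk'}$ for all $i',j',k'$. *)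

theory Defs
  imports "Jordan_Normal_Form.Matrix" "Jordan_Normal_Form.Determinant"
begin

text \<open>An m x n x q spatial matrix is represented by its entry function
  A i j k (indices 0-based, i < m, j < n, k < q); entries outside the range are irrelevant.
  The horizontal slice k is the m x n matrix of entries A i j k.\<close>

type_synonym 'a spatial = "nat \<Rightarrow> nat \<Rightarrow> nat \<Rightarrow> 'a"

definition spatial_equiv ::
  "nat \<Rightarrow> nat \<Rightarrow> nat \<Rightarrow> 'a::comm_ring_1 spatial \<Rightarrow> 'a spatial \<Rightarrow> bool" where
  "spatial_equiv m n q A B \<longleftrightarrow>
     (\<exists>R S T. R \<in> carrier_mat m m \<and> S \<in> carrier_mat n n \<and> T \<in> carrier_mat q q \<and>
        invertible_mat R \<and> invertible_mat S \<and> invertible_mat T \<and>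
        (\<forall>i'<m. \<forall>j'<n. \<forall>k'<q.
           B i' j' k' = (\<Sum>i<m. \<Sum>j<n. \<Sum>k<q. A i j k * R $$ (i, i') * S $$ (j, j') * T $$ (k, k'))))"

definition D :: "'a::field \<Rightarrow> 'a \<Rightarrow> 'a spatial" where
  "D u v i j k =
     (if i < 2 \<and> j < 2 \<and> k < 2 then
        (if k = 0 then (if i = j then 1 else 0)
         else (if i = 0 \<and> j = 0 then 0
               else if i = 0 \<and> j = 1 then v
               else if i = 1 \<and> j = 0 then 1
               else u))
      else 0)"

end

theory Submission
  imports Defs
begin

text \<open>Transforming the third index by T turns the two slices I and C (the companion matrix
  of X^2 - u X - v) into P = aI + bC and Q = cI + dC, and R, S then act on both slices as
  X \<mapsto> R^T X S. Once the first slice is normalised to I, the second one equals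
  S^-1 (P^-1 Q) S, so u' and -v' are the trace and determinant of
  P^-1 Q; these are the stated quotients. Conversely, when ad - bc \<noteq> 0 the matrix
  P^-1 Q is not scalar, hence similar to the companion matrix of its characteristic
  polynomial, which is the second slice of D(u',v').\<close>

definition mat2 :: "'a \<Rightarrow> 'a \<Rightarrow> 'a \<Rightarrow> 'a \<Rightarrow> 'a mat" where
  "mat2 a b c d = mat 2 2 (\<lambda>(i, j). if i = 0 then if j = 0 then a else b else if j = 0 then c else d)"

lemma mat2_carrier [simp]: "mat2 a b c d \<in> carrier_mat 2 2"
  by (simp add: mat2_def)

lemma mat2_index [simp]:
  "mat2 a b c d $$ (0, 0) = a" "mat2 a b c d $$ (0, 1) = b"
  "mat2 a b c d $$ (1, 0) = c" "mat2 a b c d $$ (1, 1) = d"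
  by (simp_all add: mat2_def)

text \<open>The simplifier rewrites some occurrences of the index 1 to Suc 0.\<close>

lemmas mat2_index_Suc [simp] = mat2_index[unfolded One_nat_def]

lemma mat2_eq_iff:
  "mat2 a b c d = mat2 a' b' c' d' \<longleftrightarrow> a = a' \<and> b = b' \<and> c = c' \<and> d = d'"
  by (metis mat2_index)

lemma one_mat2: "1\<^sub>m 2 = mat2 1 0 0 1"
  by (rule eq_matI) (auto simp: mat2_def less_2_cases_iff)

lemma mat2_mult [simp]:
  "mat2 a b c d * mat2 a' b' c' d' =
     mat2 (a * a' + b * c') (a * b' + b * d') (c * a' + d * c') (c * b' + d * d')"
  by (rule eq_matI) (auto simp: mat2_def less_2_cases_iff scalar_prod_def numeral_2_eq_2)

lemma smult_mat2 [simp]: "x \<cdot>\<^sub>m mat2 a b c d = mat2 (x * a) (x * b) (x * c) (x * d)"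
  by (rule eq_matI) (auto simp: mat2_def less_2_cases_iff)

lemma add_mat2 [simp]: "mat2 a b c d + mat2 a' b' c' d' = mat2 (a + a') (b + b') (c + c') (d + d')"
  by (rule eq_matI) (auto simp: mat2_def less_2_cases_iff)

lemma det_mat2x2:
  fixes A :: "'a::comm_ring_1 mat"
  assumes "A \<in> carrier_mat 2 2"
  shows "det A = A $$ (0, 0) * A $$ (1, 1) - A $$ (0, 1) * A $$ (1, 0)"
proof -
  have "det A = (\<Sum>i<2. A $$ (i, 0) * cofactor A i 0)"
    using assms by (rule laplace_expansion_column) simp
  also have "\<dots> = A $$ (0, 0) * A $$ (1, 1) - A $$ (0, 1) * A $$ (1, 0)"
    using assms by (simp add: numeral_2_eq_2 cofactor_def det_single mat_delete_def mat_delete_carrier)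
  finally show ?thesis .
qed

lemma det_mat2 [simp]: "det (mat2 a b c d) = a * d - b * (c :: 'a::comm_ring_1)"
  by (subst det_mat2x2) (simp_all only: mat2_carrier mat2_index)

lemma adj_mat_mat2 [simp]: "adj_mat (mat2 a b c d) = mat2 d (- b) (- c) (a :: 'a::comm_ring_1)"
  by (rule eq_matI) (auto simp: adj_mat_def mat2_def less_2_cases_iff cofactor_def det_single mat_delete_def)

lemma invertible_mat_iff_det:
  fixes A :: "'a::field mat"
  assumes A: "A \<in> carrier_mat n n"
  shows "invertible_mat A \<longleftrightarrow> det A \<noteq> 0"
proof
  assume "invertible_mat A"
  then obtain B where AB: "A * B = 1\<^sub>m n" and BA: "B * A = 1\<^sub>m (dim_row B)"
    using A unfolding invertible_mat_def inverts_mat_def by auto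
  have "B \<in> carrier_mat n n"
    using A arg_cong[OF AB, of dim_col] arg_cong[OF BA, of dim_col] by auto
  then have "det A * det B = 1"
    using A AB by (metis det_mult det_one)
  then show "det A \<noteq> 0" by auto
next
  assume "det A \<noteq> 0"
  from det_non_zero_imp_unit[OF A this, of undefined] show "invertible_mat A"
    using A unfolding Units_def ring_mat_def invertible_mat_def inverts_mat_def by auto
qed

definition trace :: "'a::comm_ring_1 mat \<Rightarrow> 'a" where
  "trace A = (\<Sum>i<dim_row A. A $$ (i, i))"

lemma trace_mult_comm:
  assumes "A \<in> carrier_mat n m" "B \<in> carrier_mat m n"
  shows "trace (A * B) = trace (B * A)"
  using assms by (simp add: trace_def scalar_prod_def sum.swap[of _ "{..<n}"] atLeast0LessThan mult.commute)

lemma trace_mat2 [simp]: "trace (mat2 a b c d) = a + d"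
  by (simp add: trace_def mat2_def numeral_2_eq_2)

lemma trace_smult_mat:
  assumes "A \<in> carrier_mat n n"
  shows "trace (c \<cdot>\<^sub>m A) = c * trace A"
  using assms by (simp add: trace_def sum_distrib_left)

text \<open>Here M = S^-1 (P^-1 Q) S, and adj_mat P / det P = P^-1.\<close>

lemma normalized_pencil_det_trace:
  fixes P Q L S M :: "'a::field mat"
  assumes carr: "P \<in> carrier_mat n n" "Q \<in> carrier_mat n n" "L \<in> carrier_mat n n" "S \<in> carrier_mat n n"
    and LPS: "L * P * S = 1\<^sub>m n" and LQS: "L * Q * S = M"
  shows "det P \<noteq> 0" "det P * det M = det Q" "det P * trace M = trace (Q * adj_mat P)"
proof -
  have det_LPS: "det L * det P * det S = 1"
    using arg_cong[OF LPS, of det] carr by (simp add: det_mult mult.assoc)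
  then show "det P \<noteq> 0" by auto
  have "det P * det M = det Q * (det L * det P * det S)"
    using carr by (simp add: LQS[symmetric] det_mult)
  then show "det P * det M = det Q"
    using det_LPS by simp
  have SL: "S * L \<in> carrier_mat n n"
    using carr by simp
  have "P * S * L = 1\<^sub>m n"
    using carr LPS by (intro mat_mult_left_right_inverse[of L]) auto
  then have "adj_mat P = adj_mat P * (P * (S * L))"
    using carr adj_mat(1)[OF carr(1)] by simp
  also have "\<dots> = (adj_mat P * P) * (S * L)"
    using carr adj_mat(1)[OF carr(1)] by (intro assoc_mult_mat[symmetric]) auto
  also have "\<dots> = det P \<cdot>\<^sub>m (S * L)"
    using carr by (simp add: adj_mat(3)[OF carr(1)] mult_smult_assoc_mat[OF one_carrier_mat SL])
  finally have adj: "adj_mat P = det P \<cdot>\<^sub>m (S * L)" .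
  have "trace M = trace (S * (L * Q))"
    unfolding LQS[symmetric] using carr by (intro trace_mult_comm) auto
  also have "\<dots> = trace ((S * L) * Q)"
    using carr by simp
  also have "\<dots> = trace (Q * (S * L))"
    using carr by (intro trace_mult_comm) auto
  finally show "det P * trace M = trace (Q * adj_mat P)"
    using carr SL by (simp add: adj mult_smult_distrib[OF carr(2) SL] trace_smult_mat[of _ n])
qed

definition slice :: "nat \<Rightarrow> nat \<Rightarrow> 'a spatial \<Rightarrow> nat \<Rightarrow> 'a mat" where
  "slice m n A k = mat m n (\<lambda>(i, j). A i j k)"

definition slice_comb :: "nat \<Rightarrow> nat \<Rightarrow> nat \<Rightarrow> 'a::comm_ring_1 spatial \<Rightarrow> 'a mat \<Rightarrow> nat \<Rightarrow> 'a mat" where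
  "slice_comb m n q A T k' = mat m n (\<lambda>(i, j). \<Sum>k<q. T $$ (k, k') * A i j k)"

lemma slice_eq_iff:
  assumes "X \<in> carrier_mat m n"
  shows "slice m n B k = X \<longleftrightarrow> (\<forall>i<m. \<forall>j<n. B i j k = X $$ (i, j))"
  using assms by (auto simp: mat_eq_iff slice_def)

lemma transformed_slice_index:
  assumes "R \<in> carrier_mat m m" "S \<in> carrier_mat n n" "i' < m" "j' < n"
  shows "(transpose_mat R * slice_comb m n q A T k' * S) $$ (i', j') =
    (\<Sum>i<m. \<Sum>j<n. \<Sum>k<q. A i j k * R $$ (i, i') * S $$ (j, j') * T $$ (k, k'))"
  using assms
  by (simp add: slice_comb_def scalar_prod_def sum_distrib_left sum_distrib_right atLeast0LessThan ac_simps)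
    (rule sum.swap)

lemma spatial_equiv_iff_slices:
  "spatial_equiv m n q A B \<longleftrightarrow>
     (\<exists>R S T. R \<in> carrier_mat m m \<and> S \<in> carrier_mat n n \<and> T \<in> carrier_mat q q \<and>
        invertible_mat R \<and> invertible_mat S \<and> invertible_mat T \<and>
        (\<forall>k'<q. slice m n B k' = transpose_mat R * slice_comb m n q A T k' * S))"
proof -
  have "(\<forall>i'<m. \<forall>j'<n. \<forall>k'<q.
           B i' j' k' = (\<Sum>i<m. \<Sum>j<n. \<Sum>k<q. A i j k * R $$ (i, i') * S $$ (j, j') * T $$ (k, k')))
      \<longleftrightarrow> (\<forall>k'<q. slice m n B k' = transpose_mat R * slice_comb m n q A T k' * S)"
    if "R \<in> carrier_mat m m" "S \<in> carrier_mat n n" for R S T :: "'a mat"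
  proof -
    have "transpose_mat R * slice_comb m n q A T k' * S \<in> carrier_mat m n" for k'
      using that by (auto intro!: mult_carrier_mat simp: slice_comb_def)
    with that show ?thesis
      by (auto simp: slice_eq_iff transformed_slice_index simp del: index_mult_mat assoc_mult_mat)
  qed
  then show ?thesis
    unfolding spatial_equiv_def by blast
qed

text \<open>The companion matrix of X^2 - u X - v, i.e.\ the second slice of D u v.\<close>

definition companion :: "'a::field \<Rightarrow> 'a \<Rightarrow> 'a mat" where
  "companion u v = mat2 0 v 1 u"

definition pencil :: "'a::field \<Rightarrow> 'a \<Rightarrow> 'a \<Rightarrow> 'a \<Rightarrow> 'a mat" where
  "pencil u v a b = a \<cdot>\<^sub>m 1\<^sub>m 2 + b \<cdot>\<^sub>m companion u v"

lemma pencil_mat2: "pencil u v a b = mat2 a (b * v) b (a + b * u)"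
  by (simp add: pencil_def companion_def one_mat2)

lemma slice_D: "slice 2 2 (D u v) 0 = 1\<^sub>m 2" "slice 2 2 (D u v) 1 = companion u v"
  by (auto simp: slice_def D_def companion_def mat2_def less_2_cases_iff)

lemma slice_comb_D: "slice_comb 2 2 2 (D u v) T k = pencil u v (T $$ (0, k)) (T $$ (1, k))"
  by (auto simp: slice_comb_def D_def pencil_mat2 mat2_def less_2_cases_iff numeral_2_eq_2)

lemma all_less_two: "(\<forall>k<2. P k) \<longleftrightarrow> P 0 \<and> P (1::nat)"
  by (auto simp: less_2_cases_iff)

lemma spatial_equiv_D_iff:
  "spatial_equiv 2 2 2 (D u v) (D u' v') \<longleftrightarrow>
     (\<exists>R S T. R \<in> carrier_mat 2 2 \<and> S \<in> carrier_mat 2 2 \<and> T \<in> carrier_mat 2 2 \<and>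
        invertible_mat R \<and> invertible_mat S \<and> invertible_mat T \<and>
        transpose_mat R * pencil u v (T $$ (0, 0)) (T $$ (1, 0)) * S = 1\<^sub>m 2 \<and>
        transpose_mat R * pencil u v (T $$ (0, 1)) (T $$ (1, 1)) * S = companion u' v')"
  unfolding spatial_equiv_iff_slices all_less_two slice_D slice_comb_D
  by (simp add: eq_commute[of "1\<^sub>m 2"] eq_commute[of "companion u' v'"])

lemma normalized_pencil_params:
  fixes u v a b c d u' v' :: "'a::field"
  assumes "L \<in> carrier_mat 2 2" "S \<in> carrier_mat 2 2"
    and "L * pencil u v a b * S = 1\<^sub>m 2" "L * pencil u v c d * S = companion u' v'"
  shows "a^2 + u * a * b - v * b^2 \<noteq> 0 \<and>
    u' = (2 * a * c + u * a * d + u * c * b - 2 * v * b * d) / (a^2 + u * a * b - v * b^2) \<and>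
    v' = (- (c^2) - u * c * d + v * d^2) / (a^2 + u * a * b - v * b^2)"
proof -
  note invariants = normalized_pencil_det_trace[of "pencil u v a b" 2 "pencil u v c d", OF _ _ assms]
  have det_P: "det (pencil u v a b) = a^2 + u * a * b - v * b^2"
    by (simp add: pencil_mat2 power2_eq_square algebra_simps)
  then have nz: "a^2 + u * a * b - v * b^2 \<noteq> 0"
    using invariants(1) by (simp add: pencil_mat2)
  have "(a^2 + u * a * b - v * b^2) * u' = 2 * a * c + u * a * d + u * c * b - 2 * v * b * d"
    using invariants(3) det_P by (simp add: pencil_mat2 companion_def algebra_simps power2_eq_square)
  moreover have "(a^2 + u * a * b - v * b^2) * v' = - (c^2) - u * c * d + v * d^2"
    using invariants(2) det_P by (simp add: pencil_mat2 companion_def algebra_simps power2_eq_square)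
  ultimately show ?thesis
    using nz by (simp add: eq_divide_eq mult.commute)
qed

lemma pencil_normal_form_exists:
  fixes u v a b c d :: "'a::field"
  defines "\<Delta> \<equiv> a^2 + u * a * b - v * b^2"
  assumes det_T: "a * d - b * c \<noteq> 0" and \<Delta>: "\<Delta> \<noteq> 0"
  shows "\<exists>L S. L \<in> carrier_mat 2 2 \<and> S \<in> carrier_mat 2 2 \<and> invertible_mat L \<and> invertible_mat S \<and>
    L * pencil u v a b * S = 1\<^sub>m 2 \<and>
    L * pencil u v c d * S = companion
      ((2 * a * c + u * a * d + u * c * b - 2 * v * b * d) / \<Delta>) ((- (c^2) - u * c * d + v * d^2) / \<Delta>)"
proof -
  txt \<open>L is the adjugate of T = mat2 a c b d; it makes L * pencil u v a b upper triangular,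
    and S is the inverse of that triangular matrix.\<close>
  define \<delta> where "\<delta> = a * d - b * c"
  define K where "K = a * c + u * b * c - v * b * d"
  define L where "L = mat2 d (- c) (- b) a"
  define S where "S = mat2 (1 / \<delta>) (K / (\<delta> * \<Delta>)) 0 (1 / \<Delta>)"
  have \<delta>: "\<delta> \<noteq> 0"
    using det_T by (simp add: \<delta>_def)
  have LP: "L * pencil u v a b = mat2 \<delta> (- K) 0 \<Delta>"
    by (simp add: L_def pencil_mat2 mat2_eq_iff \<delta>_def K_def \<Delta>_def algebra_simps power2_eq_square)
  have LQ: "L * pencil u v c d = mat2 0 (- (c^2) - u * c * d + v * d^2) \<delta> (a * c + u * a * d - v * b * d)"
    by (simp add: L_def pencil_mat2 mat2_eq_iff \<delta>_def algebra_simps power2_eq_square)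
  have "invertible_mat L"
    using \<delta> by (simp add: L_def invertible_mat_iff_det[of _ 2] \<delta>_def algebra_simps)
  moreover have "invertible_mat S"
    using \<delta> \<Delta> by (simp add: S_def invertible_mat_iff_det[of _ 2])
  moreover have "L * pencil u v a b * S = 1\<^sub>m 2"
    using \<delta> \<Delta> by (simp add: LP S_def one_mat2 mat2_eq_iff)
  moreover have "L * pencil u v c d * S = companion
      ((2 * a * c + u * a * d + u * c * b - 2 * v * b * d) / \<Delta>) ((- (c^2) - u * c * d + v * d^2) / \<Delta>)"
    using \<delta> \<Delta> by (simp add: LQ S_def K_def companion_def mat2_eq_iff field_simps)
  ultimately show ?thesis
    unfolding L_def S_def by (intro exI conjI) simp_all
qed

theorem lemma3:
  fixes u v u' v' :: "'a::field"
  shows "spatial_equiv 2 2 2 (D u v) (D u' v') \<longleftrightarrow>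
    (\<exists>a b c d :: 'a.
       a * d - b * c \<noteq> 0 \<and> a^2 + u * a * b - v * b^2 \<noteq> 0 \<and>
       u' = (2 * a * c + u * a * d + u * c * b - 2 * v * b * d) / (a^2 + u * a * b - v * b^2) \<and>
       v' = (- (c^2) - u * c * d + v * d^2) / (a^2 + u * a * b - v * b^2))"
    (is "?equiv \<longleftrightarrow> (\<exists>a b c d. ?params a b c d)")
proof
  assume ?equiv
  then obtain R S T where carr: "R \<in> carrier_mat 2 2" "S \<in> carrier_mat 2 2" "T \<in> carrier_mat 2 2"
    and "invertible_mat T"
    and eqs: "transpose_mat R * pencil u v (T $$ (0, 0)) (T $$ (1, 0)) * S = 1\<^sub>m 2"
      "transpose_mat R * pencil u v (T $$ (0, 1)) (T $$ (1, 1)) * S = companion u' v'"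
    unfolding spatial_equiv_D_iff by blast
  then have "T $$ (0, 0) * T $$ (1, 1) - T $$ (1, 0) * T $$ (0, 1) \<noteq> 0"
    using invertible_mat_iff_det[OF carr(3)] det_mat2x2[OF carr(3)] by (simp add: mult.commute)
  with normalized_pencil_params[OF _ carr(2) eqs] carr(1)
  show "\<exists>a b c d. ?params a b c d" by auto
next
  assume "\<exists>a b c d. ?params a b c d"
  then obtain a b c d where det_T: "a * d - b * c \<noteq> 0" and params: "?params a b c d"
    by blast
  then obtain L S where LS: "L \<in> carrier_mat 2 2" "S \<in> carrier_mat 2 2" "invertible_mat L" "invertible_mat S"
    "L * pencil u v a b * S = 1\<^sub>m 2" "L * pencil u v c d * S = companion u' v'"
    using pencil_normal_form_exists[of a d b c u v] by auto
  have T: "invertible_mat (mat2 a c b d)"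
    using det_T by (simp add: invertible_mat_iff_det[of _ 2] mult.commute)
  show ?equiv
    unfolding spatial_equiv_D_iff
    by (rule exI[of _ "transpose_mat L"], rule exI[of _ S], rule exI[of _ "mat2 a c b d"])
      (use LS T in \<open>simp add: invertible_mat_iff_det[of _ 2] det_transpose\<close>)
qed

end
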